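(* Let $c>0$ and let $r\geq 1$ be an integer. If $N\geq 1$ and $r-1\leq c\log N$, then $$ \sum_{a\leq N}\tau_r(a)\leq \frac{(1+c)^{r-1}}{(r-1)!}\,N(\log N)^{r-1}. $$
   Context: $a$ runs over positive integers. For an integer $r\geq1$, $\tau_r(a)$ is the number of ways to write $a$ as an ordered product of $r$ positive integers. *)

theory Defs
  imports Complex_Main
begin

definition tau :: "nat \<Rightarrow> nat \<Rightarrow> nat" where
  "tau r a = card {xs :: nat list. length xs = r \<and> (\<forall>x\<in>set xs. 0 < x) \<and> prod_list xs = a}"

end

theory Submission
  imports Defs
begin

text \<open>Let \<open>S\<^sub>r(x)\<close> count the \<open>r\<close>-tuples of positive integers with product at most \<open>x\<close>,
so that \<open>S\<^sub>r(N) = \<Sum>\<^sub>a\<^sub>\<le>\<^sub>N \<tau>\<^sub>r(a)\<close>. Splitting off the first entry gives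
\<open>S\<^sub>k\<^sub>+\<^sub>1(x) = \<Sum>\<^sub>m\<^sub>\<le>\<^sub>x S\<^sub>k(x/m)\<close>, and induction on \<open>k\<close> yields
\<open>S\<^sub>k\<^sub>+\<^sub>1(x) \<le> x (ln x + k)\<^sup>k / k!\<close>: the sum \<open>\<Sum>\<^sub>m\<^sub>\<le>\<^sub>x (A - ln m)\<^sup>k / m\<close> is compared
term by term with \<open>\<integral> (A - t)\<^sup>k dt\<close> via \<open>1/(m+1) \<le> ln (m+1) - ln m\<close>, and the extra
term \<open>A\<^sup>k\<close> from \<open>m = 1\<close> is absorbed by shifting \<open>A\<close> to \<open>A + 1\<close>.
Finally \<open>k \<le> c ln N\<close> turns \<open>ln N + k\<close> into \<open>(1 + c) ln N\<close>.\<close>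

definition bounded_prod_tuples :: "nat \<Rightarrow> nat \<Rightarrow> nat list set" where
  "bounded_prod_tuples r n = {xs. length xs = r \<and> (\<forall>x\<in>set xs. 0 < x) \<and> prod_list xs \<le> n}"

lemma prod_list_pos_ge_member:
  assumes "\<forall>x\<in>set xs. 0 < (x::nat)"
  shows "0 < prod_list xs" and "x \<in> set xs \<Longrightarrow> x \<le> prod_list xs"
  using assms
proof (induction xs)
  case (Cons a xs)
  { case 1 then show ?case using Cons.IH(1) by simp }
  { case 2
    have "prod_list xs \<le> a * prod_list xs" and "a \<le> a * prod_list xs"
      using Cons.IH(1) 2 by simp_all
    then show ?case using Cons.IH(2) 2 by (auto intro: order_trans) }
qed simp_all

lemma finite_bounded_prod_tuples: "finite (bounded_prod_tuples r n)"
proof -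
  have "bounded_prod_tuples r n \<subseteq> {xs. set xs \<subseteq> {1..n} \<and> length xs = r}"
    using prod_list_pos_ge_member unfolding bounded_prod_tuples_def
    by (fastforce simp: Suc_le_eq)
  then show ?thesis
    using finite_lists_length_eq[of "{1..n}" r] finite_subset by blast
qed

lemma sum_tau_eq_card_bounded_prod_tuples:
  "(\<Sum>a\<in>{1..n}. tau r a) = card (bounded_prod_tuples r n)"
proof -
  define F :: "nat \<Rightarrow> nat list set"
    where "F a = {xs. length xs = r \<and> (\<forall>x\<in>set xs. 0 < x) \<and> prod_list xs = a}" for a
  have eq: "bounded_prod_tuples r n = (\<Union>a\<in>{1..n}. F a)"
    unfolding bounded_prod_tuples_def F_def using prod_list_pos_ge_member(1)
    by (fastforce simp: Suc_le_eq)
  have "finite (F a)" if "a \<in> {1..n}" for a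
    using that by (intro finite_subset[OF _ finite_bounded_prod_tuples[of r n]])
      (auto simp: bounded_prod_tuples_def F_def)
  then show ?thesis
    unfolding eq tau_def F_def[symmetric] by (subst card_UN_disjoint) (auto simp: F_def)
qed

lemma bounded_prod_tuples_Suc:
  "bounded_prod_tuples (Suc r) n = (\<Union>m\<in>{1..n}. (Cons m) ` bounded_prod_tuples r (n div m))"
proof (rule set_eqI, rule iffI)
  fix xs assume "xs \<in> bounded_prod_tuples (Suc r) n"
  then obtain m ys where xs: "xs = m # ys" and m: "0 < m"
    and ys: "length ys = r" "\<forall>x\<in>set ys. 0 < x" and prod: "m * prod_list ys \<le> n"
    unfolding bounded_prod_tuples_def by (cases xs) auto
  have "1 \<le> prod_list ys" using prod_list_pos_ge_member(1)[OF ys(2)] by simp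
  then have "m \<le> n" using prod by (metis mult.right_neutral mult_le_mono2 order_trans)
  moreover have "prod_list ys \<le> n div m"
    using prod m by (simp add: less_eq_div_iff_mult_less_eq mult.commute)
  ultimately show "xs \<in> (\<Union>m\<in>{1..n}. (Cons m) ` bounded_prod_tuples r (n div m))"
    using xs m ys unfolding bounded_prod_tuples_def by auto
next
  fix xs assume "xs \<in> (\<Union>m\<in>{1..n}. (Cons m) ` bounded_prod_tuples r (n div m))"
  then obtain m ys where xs: "xs = m # ys" and m: "1 \<le> m"
    and ys: "ys \<in> bounded_prod_tuples r (n div m)" by auto
  have "m * prod_list ys \<le> m * (n div m)"
    using ys unfolding bounded_prod_tuples_def by auto
  also have "\<dots> \<le> n" by simp
  finally show "xs \<in> bounded_prod_tuples (Suc r) n"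
    using xs m ys unfolding bounded_prod_tuples_def by auto
qed

lemma card_bounded_prod_tuples_Suc:
  "card (bounded_prod_tuples (Suc r) n) = (\<Sum>m\<in>{1..n}. card (bounded_prod_tuples r (n div m)))"
proof -
  have "card (bounded_prod_tuples (Suc r) n)
      = (\<Sum>m\<in>{1..n}. card ((Cons m) ` bounded_prod_tuples r (n div m)))"
    unfolding bounded_prod_tuples_Suc
    by (rule card_UN_disjoint) (auto simp: finite_bounded_prod_tuples)
  also have "\<dots> = (\<Sum>m\<in>{1..n}. card (bounded_prod_tuples r (n div m)))"
    by (intro sum.cong refl card_image) auto
  finally show ?thesis .
qed

lemma card_bounded_prod_tuples_1: "card (bounded_prod_tuples 1 n) = n"
proof -
  have "bounded_prod_tuples 0 j = (if 1 \<le> j then {[]} else {})" for j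
    unfolding bounded_prod_tuples_def by auto
  then have "card (bounded_prod_tuples 1 n) = (\<Sum>m\<in>{1..n}. 1)"
    using card_bounded_prod_tuples_Suc[of 0 n]
    by (auto simp: div_greater_zero_iff Suc_le_eq intro!: sum.cong)
  then show ?thesis by simp
qed

lemma power_diff_ge_mult_power:
  fixes p q :: "'a::linordered_idom"
  assumes "0 \<le> q" "q \<le> p"
  shows "of_nat (Suc k) * (p - q) * q ^ k \<le> p ^ Suc k - q ^ Suc k"
proof (induction k)
  case (Suc k)
  have "of_nat (Suc (Suc k)) * (p - q) * q ^ Suc k
      = q * (of_nat (Suc k) * (p - q) * q ^ k) + (p - q) * q ^ Suc k"
    by (simp add: algebra_simps)
  also have "\<dots> \<le> p * (of_nat (Suc k) * (p - q) * q ^ k) + (p - q) * q ^ Suc k"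
    using assms by (intro add_right_mono mult_right_mono) auto
  also have "\<dots> \<le> p * (p ^ Suc k - q ^ Suc k) + (p - q) * q ^ Suc k"
    using Suc assms by (intro add_right_mono mult_left_mono) auto
  also have "\<dots> = p ^ Suc (Suc k) - q ^ Suc (Suc k)"
    by (simp add: algebra_simps)
  finally show ?case .
qed simp

lemma inverse_Suc_le_ln_diff:
  assumes "n \<ge> 1"
  shows "1 / real (Suc n) \<le> ln (real (Suc n)) - ln (real n)"
proof -
  have "ln (real n / real (Suc n)) \<le> real n / real (Suc n) - 1"
    using assms by (intro ln_le_minus_one) auto
  also have "\<dots> = - (1 / real (Suc n))" by (simp add: field_simps)
  finally show ?thesis using assms by (simp add: ln_div)
qed

lemma sum_ln_power_div_le_integral:
  assumes "n \<ge> 1" "ln (real n) \<le> A"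
  shows "(\<Sum>m\<in>{1..n}. (A - ln (real m)) ^ k / real m)
         \<le> A ^ k + (A ^ Suc k - (A - ln (real n)) ^ Suc k) / real (Suc k)"
  using assms
proof (induction n rule: dec_induct)
  case (step n)
  define p where "p = A - ln (real n)"
  define q where "q = A - ln (real (Suc n))"
  have ln_mono: "ln (real n) \<le> ln (real (Suc n))" using step by simp
  then have pq: "0 \<le> q" "q \<le> p" using step by (auto simp: p_def q_def)
  have "q ^ k / real (Suc n) = 1 / real (Suc n) * q ^ k" by simp
  also have "\<dots> \<le> (p - q) * q ^ k"
    using inverse_Suc_le_ln_diff[OF step(1)] pq
    by (intro mult_right_mono) (auto simp: p_def q_def)
  also have "\<dots> \<le> (p ^ Suc k - q ^ Suc k) / real (Suc k)"
    using power_diff_ge_mult_power[OF pq, of k]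
    by (subst pos_le_divide_eq) (auto simp: algebra_simps)
  finally have new_term: "q ^ k / real (Suc n) \<le> (p ^ Suc k - q ^ Suc k) / real (Suc k)" .
  have "(\<Sum>m\<in>{1..n}. (A - ln (real m)) ^ k / real m)
      \<le> A ^ k + (A ^ Suc k - p ^ Suc k) / real (Suc k)"
    using step ln_mono by (simp add: p_def)
  moreover have "(A ^ Suc k - p ^ Suc k) / real (Suc k) + (p ^ Suc k - q ^ Suc k) / real (Suc k)
      = (A ^ Suc k - q ^ Suc k) / real (Suc k)"
    by (simp add: diff_divide_distrib)
  moreover have "(\<Sum>m\<in>{1..Suc n}. (A - ln (real m)) ^ k / real m)
      = (\<Sum>m\<in>{1..n}. (A - ln (real m)) ^ k / real m) + q ^ k / real (Suc n)"
    by (simp add: sum.cl_ivl_Suc q_def)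
  ultimately show ?case
    using new_term by (simp only: flip: q_def)
qed simp

lemma sum_ln_power_div_le:
  assumes "n \<ge> 1" "ln (real n) \<le> A"
  shows "(\<Sum>m\<in>{1..n}. (A - ln (real m)) ^ k / real m) \<le> (A + 1) ^ Suc k / real (Suc k)"
proof -
  have "0 \<le> ln (real n)" using assms(1) by simp
  with assms(2) have A: "0 \<le> A" by linarith
  have "(A ^ Suc k - (A - ln (real n)) ^ Suc k) / real (Suc k) \<le> A ^ Suc k / real (Suc k)"
    using assms by (intro divide_right_mono) auto
  moreover have "A ^ k \<le> ((A + 1) ^ Suc k - A ^ Suc k) / real (Suc k)"
    using power_diff_ge_mult_power[of A "A + 1" k] A
    by (subst pos_le_divide_eq) (auto simp: mult.commute)
  ultimately show ?thesis
    using sum_ln_power_div_le_integral[OF assms, of k] by (simp add: diff_divide_distrib)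
qed

lemma card_bounded_prod_tuples_le:
  fixes x :: real
  assumes "x \<ge> 1"
  shows "real (card (bounded_prod_tuples (Suc k) (nat \<lfloor>x\<rfloor>))) \<le> x * (ln x + real k) ^ k / fact k"
  using assms
proof (induction k arbitrary: x)
  case 0
  then show ?case
    using card_bounded_prod_tuples_1[of "nat \<lfloor>x\<rfloor>"] by (simp add: One_nat_def)
next
  case (Suc k)
  define n where "n = nat \<lfloor>x\<rfloor>"
  define A where "A = ln x + real k"
  have n: "n \<ge> 1" "real n \<le> x" using Suc.prems by (simp_all add: n_def le_nat_iff)
  then have "ln (real n) \<le> A" by (simp add: A_def add_increasing2)
  have "real (card (bounded_prod_tuples (Suc (Suc k)) n))
      = (\<Sum>m\<in>{1..n}. real (card (bounded_prod_tuples (Suc k) (n div m))))"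
    by (simp add: card_bounded_prod_tuples_Suc)
  also have "\<dots> \<le> (\<Sum>m\<in>{1..n}. x / real m * (ln (x / real m) + real k) ^ k / fact k)"
  proof (rule sum_mono)
    fix m assume m: "m \<in> {1..n}"
    have "nat \<lfloor>x / real m\<rfloor> = n div m"
      using floor_divide_real_eq_div[of "int m" x] Suc.prems by (simp add: n_def nat_div_distrib)
    then show "real (card (bounded_prod_tuples (Suc k) (n div m)))
             \<le> x / real m * (ln (x / real m) + real k) ^ k / fact k"
      using Suc.IH[of "x / real m"] m n by simp
  qed
  also have "\<dots> = x / fact k * (\<Sum>m\<in>{1..n}. (A - ln (real m)) ^ k / real m)"
    unfolding sum_distrib_left using Suc.prems
    by (intro sum.cong refl) (auto simp: A_def ln_div algebra_simps)
  also have "\<dots> \<le> x / fact k * ((A + 1) ^ Suc k / real (Suc k))"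
    using n Suc.prems \<open>ln (real n) \<le> A\<close> by (intro mult_left_mono sum_ln_power_div_le) auto
  also have "\<dots> = x * (ln x + real (Suc k)) ^ Suc k / fact (Suc k)"
    by (simp add: A_def field_simps)
  finally show ?case by (simp add: n_def)
qed

theorem corollary2p1:
  fixes c N :: real and r :: nat
  assumes "c > 0" and "r \<ge> 1" and "N \<ge> 1"
    and "real (r - 1) \<le> c * ln N"
  shows "real (\<Sum>a\<in>{1..nat \<lfloor>N\<rfloor>}. tau r a)
           \<le> (1 + c) ^ (r - 1) / fact (r - 1) * N * (ln N) ^ (r - 1)"
proof -
  define k where "k = r - 1"
  have r: "r = Suc k" using assms(2) by (simp add: k_def)
  have "real (\<Sum>a\<in>{1..nat \<lfloor>N\<rfloor>}. tau r a) = real (card (bounded_prod_tuples (Suc k) (nat \<lfloor>N\<rfloor>)))"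
    unfolding sum_tau_eq_card_bounded_prod_tuples r ..
  also have "\<dots> \<le> N * (ln N + real k) ^ k / fact k"
    by (rule card_bounded_prod_tuples_le[OF assms(3)])
  also have "\<dots> \<le> N * ((1 + c) * ln N) ^ k / fact k"
    using assms(3,4)
    by (intro divide_right_mono mult_left_mono power_mono) (auto simp: k_def algebra_simps)
  also have "\<dots> = (1 + c) ^ (r - 1) / fact (r - 1) * N * (ln N) ^ (r - 1)"
    by (simp add: k_def power_mult_distrib)
  finally show ?thesis .
qed

end
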